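(* Let $A_m(x)=R_{2m}(x)$, $B_m(x)=R_{2m+1}(x)$ and $t=\frac{1+x+x^2}{2x}$. For every integer $m\ge1$, as identities of rational functions in $x$, \[ A_m(x)=x^{m-1}(1+x)U_m(t)-x^{m-2}(1+x+x^2)U_{m-1}(t), \] \[ B_m(x)=x^mU_m(t)+x^{m+2}U_{m-1}(t). \]
   Context: For $n\ge1$ let $\Xi_n$ be the poset on $\{x_1,\dots,x_n\}$ whose cover relations are exactly: $x_2\prec x_1$, $x_3\prec x_2$, and for $3\le i\le n-1$, $x_i\prec x_{i+1}$ if $i$ is odd and $x_{i+1}\prec x_i$ if $i$ is even (so $x_1>x_2>x_3<x_4>x_5<\cdots$). A filter of a poset is an up-closed subset. $\Omega_n$ is the lattice of filters of $\Xi_n$ under reverse inclusion; $\Omega_0$ is the one-element lattice. $R_n(x)=\sum_{F\in\Omega_n}x^{\,n-|F|}$ is the rank generating function of $\Omega_n$, with $R_0(x)=1$. $U_n$ are the Chebyshev polynomials of the second kind: $U_0(y)=1$, $U_1(y)=2y$, $U_n(y)=2yU_{n-1}(y)-U_{n-2}(y)$ for $n\ge2$. *)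

theory Defs
  imports Complex_Main
begin

text \<open>The poset Xi_n on elements 1..n (element i stands for x_i).
  xi_cover n i j means x_i is covered by x_j (x_i \<prec> x_j).\<close>
definition xi_cover :: "nat \<Rightarrow> nat \<Rightarrow> nat \<Rightarrow> bool" where
  "xi_cover n i j \<longleftrightarrow> i \<in> {1..n} \<and> j \<in> {1..n} \<and>
     ((i = 2 \<and> j = 1) \<or> (i = 3 \<and> j = 2) \<or>
      (\<exists>k. 3 \<le> k \<and> k \<le> n - 1 \<and>
         ((odd k \<and> i = k \<and> j = k + 1) \<or> (even k \<and> i = k + 1 \<and> j = k))))"

definition xi_le :: "nat \<Rightarrow> nat \<Rightarrow> nat \<Rightarrow> bool" where
  "xi_le n = (xi_cover n)\<^sup>*\<^sup>*"

definition xi_filters :: "nat \<Rightarrow> nat set set" where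
  "xi_filters n = {F. F \<subseteq> {1..n} \<and>
      (\<forall>a \<in> F. \<forall>b \<in> {1..n}. xi_le n a b \<longrightarrow> b \<in> F)}"

definition R :: "nat \<Rightarrow> real \<Rightarrow> real" where
  "R n x = (\<Sum>F \<in> xi_filters n. x ^ (n - card F))"

fun chebU :: "nat \<Rightarrow> real \<Rightarrow> real" where
  "chebU 0 y = 1"
| "chebU (Suc 0) y = 2 * y"
| "chebU (Suc (Suc n)) y = 2 * y * chebU (Suc n) y - chebU n y"

end

theory Submission
  imports Defs
begin

text \<open>Going from \<open>\<Xi>(n)\<close> to \<open>\<Xi>(n+1)\<close> adds the element \<open>n+1\<close>, covered by \<open>n\<close> when
  \<open>n = 1\<close> or \<open>n\<close> is even and covering \<open>n\<close> otherwise. Splitting \<open>R(n)\<close> according to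
  whether a filter contains \<open>n\<close> therefore gives first-order linear recurrences, and
  eliminating the split yields \<open>R(2m+2) = R(2m+1) + x\<^sup>2 R(2m)\<close> and
  \<open>R(2m+3) = R(2m+1) + x R(2m+2)\<close>. Since \<open>2 t x = 1 + x + x\<^sup>2\<close>, this pair of
  recurrences is the Chebyshev recurrence \<open>U(m+1) = 2 t U(m) - U(m-1)\<close> in disguise, and
  both closed forms follow by a joint induction on \<open>m\<close>.\<close>

lemma up_closed_rtranclp_iff:
  assumes "\<And>a b. r a b \<Longrightarrow> b \<in> S"
  shows "(\<forall>a \<in> F. \<forall>b \<in> S. r\<^sup>*\<^sup>* a b \<longrightarrow> b \<in> F) \<longleftrightarrow> (\<forall>a b. r a b \<longrightarrow> a \<in> F \<longrightarrow> b \<in> F)"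
proof
  assume "\<forall>a \<in> F. \<forall>b \<in> S. r\<^sup>*\<^sup>* a b \<longrightarrow> b \<in> F"
  then show "\<forall>a b. r a b \<longrightarrow> a \<in> F \<longrightarrow> b \<in> F" using assms by blast
next
  assume step: "\<forall>a b. r a b \<longrightarrow> a \<in> F \<longrightarrow> b \<in> F"
  have "b \<in> F" if "r\<^sup>*\<^sup>* a b" "a \<in> F" for a b
    using that by (induction rule: rtranclp_induct) (use step in blast)+
  then show "\<forall>a \<in> F. \<forall>b \<in> S. r\<^sup>*\<^sup>* a b \<longrightarrow> b \<in> F" by blast
qed

lemma xi_cover_iff: "xi_cover n i j \<longleftrightarrow> i \<in> {1..n} \<and> j \<in> {1..n} \<and>
   (i = 2 \<and> j = 1 \<or> i = 3 \<and> j = 2 \<or> (3 \<le> i \<and> odd i \<and> j = i + 1 \<and> i < n)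
    \<or> (3 \<le> j \<and> even j \<and> i = j + 1 \<and> j < n))"
  unfolding xi_cover_def by auto

lemma xi_cover_Suc:
  assumes "n \<ge> 1"
  shows "xi_cover (Suc n) i j \<longleftrightarrow> xi_cover n i j \<or>
    (if n = 1 \<or> even n then i = Suc n \<and> j = n else i = n \<and> j = Suc n)"
proof (cases "n = 1 \<or> even n")
  case True
  then show ?thesis using assms unfolding xi_cover_iff by (auto simp: le_Suc_eq less_Suc_eq)
next
  case False
  then have "3 \<le> n" using assms by presburger
  with False show ?thesis unfolding xi_cover_iff by (auto simp: le_Suc_eq less_Suc_eq)
qed

lemma xi_cover_range: "xi_cover n i j \<Longrightarrow> i \<in> {1..n} \<and> j \<in> {1..n}"
  by (simp add: xi_cover_def)

lemma xi_filters_iff: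
  "F \<in> xi_filters n \<longleftrightarrow> F \<subseteq> {1..n} \<and> (\<forall>i j. xi_cover n i j \<longrightarrow> i \<in> F \<longrightarrow> j \<in> F)"
proof -
  have "\<And>i j. xi_cover n i j \<Longrightarrow> j \<in> {1..n}"
    using xi_cover_range by blast
  then show ?thesis
    unfolding xi_filters_def xi_le_def by (simp add: up_closed_rtranclp_iff)
qed

lemma xi_filters_subset: "F \<in> xi_filters n \<Longrightarrow> F \<subseteq> {1..n}"
  by (simp add: xi_filters_iff)

lemma xi_filters_Suc:
  assumes "n \<ge> 1"
  shows "F \<in> xi_filters (Suc n) \<longleftrightarrow> F \<subseteq> {1..Suc n} \<and> F - {Suc n} \<in> xi_filters n \<and>
    (if n = 1 \<or> even n then Suc n \<in> F \<longrightarrow> n \<in> F else n \<in> F \<longrightarrow> Suc n \<in> F)"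
proof -
  have "(\<forall>i j. xi_cover n i j \<longrightarrow> i \<in> F \<longrightarrow> j \<in> F) \<longleftrightarrow>
      (\<forall>i j. xi_cover n i j \<longrightarrow> i \<in> F - {Suc n} \<longrightarrow> j \<in> F - {Suc n})"
    using xi_cover_range by fastforce
  moreover have "(\<forall>i j. xi_cover (Suc n) i j \<longrightarrow> i \<in> F \<longrightarrow> j \<in> F) \<longleftrightarrow>
      (\<forall>i j. xi_cover n i j \<longrightarrow> i \<in> F \<longrightarrow> j \<in> F) \<and>
      (if n = 1 \<or> even n then Suc n \<in> F \<longrightarrow> n \<in> F else n \<in> F \<longrightarrow> Suc n \<in> F)"
    unfolding xi_cover_Suc[OF assms] by auto
  moreover have "F \<subseteq> {1..Suc n} \<longleftrightarrow> F - {Suc n} \<subseteq> {1..n} \<and> F \<subseteq> {1..Suc n}"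
    by auto
  ultimately show ?thesis
    unfolding xi_filters_iff by blast
qed

lemma xi_filters_Suc_notin: "G \<in> xi_filters n \<Longrightarrow> Suc n \<notin> G"
  using xi_filters_subset by fastforce

lemma xi_filters_Suc_iff_of_notin:
  assumes "n \<ge> 1" "Suc n \<notin> G"
  shows "G \<in> xi_filters (Suc n) \<longleftrightarrow> G \<in> xi_filters n \<and> (n = 1 \<or> even n \<or> n \<notin> G)"
proof -
  have "G \<in> xi_filters n \<Longrightarrow> G \<subseteq> {1..Suc n}"
    using xi_filters_subset by fastforce
  with assms show ?thesis by (auto simp: xi_filters_Suc)
qed

lemma insert_Suc_xi_filters_Suc_iff:
  assumes "n \<ge> 1" "Suc n \<notin> G"
  shows "insert (Suc n) G \<in> xi_filters (Suc n) \<longleftrightarrow> G \<in> xi_filters n \<and> (n \<in> G \<or> \<not> (n = 1 \<or> even n))"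
proof -
  have "G \<in> xi_filters n \<Longrightarrow> G \<subseteq> {1..Suc n}"
    using xi_filters_subset by fastforce
  with assms show ?thesis by (auto simp: xi_filters_Suc)
qed

lemma Collect_mem_eq_image_insert:
  "{F. a \<in> F \<and> P F} = insert a ` {G. a \<notin> G \<and> P (insert a G)}"
proof (intro equalityI subsetI)
  fix F assume "F \<in> {F. a \<in> F \<and> P F}"
  then have "F = insert a (F - {a})" "F - {a} \<in> {G. a \<notin> G \<and> P (insert a G)}"
    by (auto simp: insert_absorb)
  then show "F \<in> insert a ` {G. a \<notin> G \<and> P (insert a G)}" by (rule image_eqI)
qed auto

lemma xi_filters_Suc_below:
  assumes "n \<ge> 1" "n = 1 \<or> even n"
  shows "{F \<in> xi_filters (Suc n). Suc n \<in> F} = insert (Suc n) ` {G \<in> xi_filters n. n \<in> G}"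
    and "{F \<in> xi_filters (Suc n). Suc n \<notin> F} = xi_filters n"
proof -
  have "{G. Suc n \<notin> G \<and> insert (Suc n) G \<in> xi_filters (Suc n)} = {G \<in> xi_filters n. n \<in> G}"
    using assms xi_filters_Suc_notin by (auto simp: insert_Suc_xi_filters_Suc_iff)
  then show "{F \<in> xi_filters (Suc n). Suc n \<in> F} = insert (Suc n) ` {G \<in> xi_filters n. n \<in> G}"
    using Collect_mem_eq_image_insert[of "Suc n" "\<lambda>F. F \<in> xi_filters (Suc n)"] by (simp add: conj_commute)
  show "{F \<in> xi_filters (Suc n). Suc n \<notin> F} = xi_filters n"
    using assms xi_filters_Suc_notin by (auto simp: xi_filters_Suc_iff_of_notin)
qed

lemma xi_filters_Suc_above:
  assumes "n \<ge> 1" "\<not> (n = 1 \<or> even n)"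
  shows "{F \<in> xi_filters (Suc n). Suc n \<in> F} = insert (Suc n) ` xi_filters n"
    and "{F \<in> xi_filters (Suc n). Suc n \<notin> F} = {G \<in> xi_filters n. n \<notin> G}"
proof -
  have "{G. Suc n \<notin> G \<and> insert (Suc n) G \<in> xi_filters (Suc n)} = xi_filters n"
    using assms xi_filters_Suc_notin by (auto simp: insert_Suc_xi_filters_Suc_iff)
  then show "{F \<in> xi_filters (Suc n). Suc n \<in> F} = insert (Suc n) ` xi_filters n"
    using Collect_mem_eq_image_insert[of "Suc n" "\<lambda>F. F \<in> xi_filters (Suc n)"] by (simp add: conj_commute)
  show "{F \<in> xi_filters (Suc n). Suc n \<notin> F} = {G \<in> xi_filters n. n \<notin> G}"
    using assms xi_filters_Suc_notin by (auto simp: xi_filters_Suc_iff_of_notin)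
qed

definition R_in :: "nat \<Rightarrow> real \<Rightarrow> real" where
  "R_in n x = (\<Sum>F \<in> {F \<in> xi_filters n. n \<in> F}. x ^ (n - card F))"

definition R_out :: "nat \<Rightarrow> real \<Rightarrow> real" where
  "R_out n x = (\<Sum>F \<in> {F \<in> xi_filters n. n \<notin> F}. x ^ (n - card F))"

lemma finite_xi_filters: "finite (xi_filters n)"
proof -
  have "xi_filters n \<subseteq> Pow {1..n}"
    using xi_filters_subset by blast
  then show ?thesis
    by (rule finite_subset) simp
qed

lemma R_eq_R_in_plus_R_out: "R n x = R_in n x + R_out n x"
proof -
  have "R_in n x + R_out n x
      = (\<Sum>F \<in> {F \<in> xi_filters n. n \<in> F} \<union> {F \<in> xi_filters n. n \<notin> F}. x ^ (n - card F))"
    unfolding R_in_def R_out_def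
    by (rule sum.union_disjoint[symmetric]) (auto simp: finite_xi_filters)
  also have "{F \<in> xi_filters n. n \<in> F} \<union> {F \<in> xi_filters n. n \<notin> F} = xi_filters n"
    by blast
  finally show ?thesis
    by (simp add: R_def)
qed

lemma sum_image_insert_corank:
  assumes "\<And>G. G \<in> A \<Longrightarrow> finite G \<and> a \<notin> G"
  shows "(\<Sum>F \<in> insert a ` A. x ^ (Suc n - card F)) = (\<Sum>G \<in> A. x ^ (n - card G))"
proof -
  have "inj_on (insert a) A"
    by (rule inj_onI) (metis Diff_insert_absorb assms)
  then show ?thesis
    using assms by (simp add: sum.reindex)
qed

lemma sum_corank_Suc:
  fixes x :: "'a::comm_semiring_1"
  assumes "\<And>F. F \<in> A \<Longrightarrow> card F \<le> n"
  shows "(\<Sum>F \<in> A. x ^ (Suc n - card F)) = x * (\<Sum>F \<in> A. x ^ (n - card F))"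
proof -
  have "(\<Sum>F \<in> A. x ^ (Suc n - card F)) = (\<Sum>F \<in> A. x * x ^ (n - card F))"
    using assms by (intro sum.cong) (simp_all add: Suc_diff_le)
  then show ?thesis
    by (simp add: sum_distrib_left)
qed

lemma xi_filters_card_le: "F \<in> xi_filters n \<Longrightarrow> card F \<le> n"
  using card_mono[of "{1..n}" F] xi_filters_subset by fastforce

lemma R_in_R_out_Suc_below:
  assumes "n \<ge> 1" "n = 1 \<or> even n"
  shows "R_in (Suc n) x = R_in n x" "R_out (Suc n) x = x * R n x"
proof -
  have "finite G \<and> Suc n \<notin> G" if "G \<in> xi_filters n" for G
    using that xi_filters_Suc_notin finite_subset[OF xi_filters_subset] by blast
  then show "R_in (Suc n) x = R_in n x"
    unfolding R_in_def xi_filters_Suc_below(1)[OF assms] by (rule sum_image_insert_corank) blast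
  show "R_out (Suc n) x = x * R n x"
    unfolding R_out_def R_def xi_filters_Suc_below(2)[OF assms] by (rule sum_corank_Suc) (rule xi_filters_card_le)
qed

lemma R_in_R_out_Suc_above:
  assumes "n \<ge> 1" "\<not> (n = 1 \<or> even n)"
  shows "R_in (Suc n) x = R n x" "R_out (Suc n) x = x * R_out n x"
proof -
  have "finite G \<and> Suc n \<notin> G" if "G \<in> xi_filters n" for G
    using that xi_filters_Suc_notin finite_subset[OF xi_filters_subset] by blast
  then show "R_in (Suc n) x = R n x"
    unfolding R_in_def R_def xi_filters_Suc_above(1)[OF assms] by (rule sum_image_insert_corank) blast
  show "R_out (Suc n) x = x * R_out n x"
    unfolding R_out_def xi_filters_Suc_above(2)[OF assms] by (rule sum_corank_Suc) (simp add: xi_filters_card_le)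
qed

lemma xi_filters_1: "xi_filters 1 = {{}, {1}}"
proof -
  have "\<not> xi_cover 1 i j" for i j
    by (simp add: xi_cover_def)
  then have "xi_filters 1 = Pow {1}"
    by (auto simp: xi_filters_iff)
  then show ?thesis
    by (auto simp: Pow_singleton_iff)
qed

lemma R_in_1: "R_in 1 x = 1" and R_out_1: "R_out 1 x = x"
proof -
  have "{F \<in> xi_filters 1. 1 \<in> F} = {{1}}" "{F \<in> xi_filters 1. 1 \<notin> F} = {{}}"
    unfolding xi_filters_1 by auto
  then show "R_in 1 x = 1" "R_out 1 x = x"
    by (simp_all add: R_in_def R_out_def)
qed

lemma R_2: "R 2 x = 1 + x + x\<^sup>2"
  and R_3: "R 3 x = 1 + x + x\<^sup>2 + x ^ 3"
proof -
  have "R_in 2 x = R_in 1 x" "R_out 2 x = x * R 1 x"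
    using R_in_R_out_Suc_below[of 1 x] unfolding Suc_1 by simp_all
  then have in2: "R_in 2 x = 1" and R2: "R 2 x = 1 + x + x\<^sup>2"
    using R_in_1 R_out_1 by (simp_all add: R_eq_R_in_plus_R_out algebra_simps power2_eq_square)
  then show "R 2 x = 1 + x + x\<^sup>2"
    by blast
  have "R_in 3 x = R_in 2 x" "R_out 3 x = x * R 2 x"
    using R_in_R_out_Suc_below[of 2 x] by (simp_all add: eval_nat_numeral)
  then show "R 3 x = 1 + x + x\<^sup>2 + x ^ 3"
    using in2 R2 unfolding R_eq_R_in_plus_R_out[of 3]
    by (simp add: algebra_simps power2_eq_square power3_eq_cube)
qed

lemma R_recurrence:
  assumes "m \<ge> 1"
  shows "R (2 * m + 2) x = R (2 * m + 1) x + x\<^sup>2 * R (2 * m) x"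
    and "R (2 * m + 3) x = R (2 * m + 1) x + x * R (2 * m + 2) x"
proof -
  have odd_m: "\<not> (2 * m + 1 = 1 \<or> even (2 * m + 1))" and even_m: "even (2 * m + 2)"
    using assms by simp_all
  have "R_out (2 * m + 1) x = x * R (2 * m) x"
    using R_in_R_out_Suc_below[of "2 * m" x] assms by simp
  moreover have "R_in (2 * m + 2) x = R (2 * m + 1) x" "R_out (2 * m + 2) x = x * R_out (2 * m + 1) x"
    using R_in_R_out_Suc_above[OF _ odd_m, of x] by simp_all
  moreover have "R_in (2 * m + 3) x = R_in (2 * m + 2) x" "R_out (2 * m + 3) x = x * R (2 * m + 2) x"
    using R_in_R_out_Suc_below[of "2 * m + 2" x] even_m by (simp_all add: eval_nat_numeral)
  ultimately show "R (2 * m + 2) x = R (2 * m + 1) x + x\<^sup>2 * R (2 * m) x"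
    and "R (2 * m + 3) x = R (2 * m + 1) x + x * R (2 * m + 2) x"
    by (simp_all add: R_eq_R_in_plus_R_out power2_eq_square)
qed

text \<open>The even identity is multiplied by \<open>x\<close> so that no negative power of \<open>x\<close> occurs.\<close>

lemma R_closed_form:
  fixes x t :: real
  assumes t: "2 * t * x = 1 + x + x\<^sup>2"
  shows "x * R (2 * Suc k) x = x ^ Suc k * (1 + x) * chebU (Suc k) t - x ^ k * (1 + x + x\<^sup>2) * chebU k t
       \<and> R (2 * Suc k + 1) x = x ^ Suc k * chebU (Suc k) t + x ^ (k + 3) * chebU k t"
proof (induction k)
  case 0
  show ?case using t by (simp add: R_2 R_3) algebra
next
  case (Suc k)
  let ?a = "chebU (Suc k) t" and ?b = "chebU k t"
  define y where "y = x ^ k"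
  have pow: "x ^ k = y" "x ^ Suc k = x * y" "x ^ Suc (Suc k) = x\<^sup>2 * y"
    "x ^ (k + 3) = x ^ 3 * y" "x ^ (Suc k + 3) = x ^ 4 * y"
    by (simp_all add: y_def power_add power2_eq_square)
  have rec: "R (2 * Suc (Suc k)) x = R (2 * Suc k + 1) x + x\<^sup>2 * R (2 * Suc k) x"
    "R (2 * Suc (Suc k) + 1) x = R (2 * Suc k + 1) x + x * R (2 * Suc (Suc k)) x"
    using R_recurrence[of "Suc k" x] by (simp_all add: eval_nat_numeral)
  have U: "chebU (Suc (Suc k)) t = 2 * t * ?a - ?b" by simp
  from Suc.IH have even: "x * R (2 * Suc k) x = x * y * (1 + x) * ?a - y * (1 + x + x\<^sup>2) * ?b"
    and odd: "R (2 * Suc k + 1) x = x * y * ?a + x ^ 3 * y * ?b"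
    unfolding pow by simp_all
  have even': "x * R (2 * Suc (Suc k)) x
      = x ^ Suc (Suc k) * (1 + x) * chebU (Suc (Suc k)) t - x ^ Suc k * (1 + x + x\<^sup>2) * ?a"
    unfolding rec(1) U pow using even odd t by algebra
  have odd': "R (2 * Suc (Suc k) + 1) x = x ^ Suc (Suc k) * chebU (Suc (Suc k)) t + x ^ (Suc k + 3) * ?a"
    using even' odd t unfolding rec(2) U pow by algebra
  from even' odd' show ?case by blast
qed

theorem mainTheorem5:
  fixes m :: nat and x :: real
  assumes "m \<ge> 1" and "x \<noteq> 0"
  defines "t \<equiv> (1 + x + x\<^sup>2) / (2 * x)"
  shows "(R (2 * m) x =
           x powi (int m - 1) * (1 + x) * chebU m t
           - x powi (int m - 2) * (1 + x + x\<^sup>2) * chebU (m - 1) t)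
         \<and> (R (2 * m + 1) x = x ^ m * chebU m t + x ^ (m + 2) * chebU (m - 1) t)"
proof -
  obtain k where m: "m = Suc k"
    using assms(1) by (cases m) auto
  have "2 * t * x = 1 + x + x\<^sup>2"
    using assms(2) by (simp add: t_def)
  then have even: "x * R (2 * m) x = x ^ m * (1 + x) * chebU m t - x ^ k * (1 + x + x\<^sup>2) * chebU k t"
    and odd: "R (2 * m + 1) x = x ^ m * chebU m t + x ^ (m + 2) * chebU (m - 1) t"
    unfolding m using R_closed_form by (simp_all add: numeral_eq_Suc)
  have "R (2 * m) x = (x * R (2 * m) x) / x"
    using assms(2) by simp
  also have "\<dots> = x ^ k * (1 + x) * chebU m t - x ^ k / x * (1 + x + x\<^sup>2) * chebU k t"
    unfolding even using assms(2) by (simp add: m diff_divide_distrib)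
  moreover have "x powi (int m - 1) = x ^ k" "x powi (int m - 2) = x ^ k / x"
    using assms(2) by (simp_all add: m power_int_diff)
  ultimately show ?thesis
    using odd m by simp
qed

end
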